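(* Consider the circuit that starts from $|\mathbf{0}\rangle\otimes|\psi\rangle$ (first register in the basis state of the trivial representation of $G$), applies $\mathcal{F}_G^{-1}$ to the first register (preparing $\frac{1}{\sqrt{|G|}}\sum_{g\in G}|g\rangle$), applies the controlled group action $U_R=\sum_{g\in G}|g\rangle\langle g|\otimes R(g)$, applies $\mathcal{F}_G$ to the first register, and measures the irrep label $\lambda$. If the input state $|\psi\rangle$ is invariant under the $R$-action of the hidden subgroup $H<G$, the outcome distribution is $$\mathrm{P}_{\mathrm{StateHSP}_\psi}[\lambda]=\frac{d_\lambda}{|G|}\sum_{c\in G/H}\sum_{h\in H}\chi_\lambda(ch)\,\langle\psi|R(c)|\psi\rangle,$$ where $\lambda$ ranges over the irreducible representations of $G$ and $G/H$ denotes a set of coset representatives.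
   Context: $G$ is a finite group with a unitary representation $R:G\to\mathrm{U}(d)$, and $|\psi\rangle\in\mathbb{C}^d$ satisfies $R(h)|\psi\rangle=|\psi\rangle$ for all $h\in H$. $\mathbb{C}^G=\mathrm{span}\{|g\rangle\}_{g\in G}$ is the regular-representation register with orthonormal basis. $\{\rho_\lambda\}$ is a complete set of unitary irreducible representations of $G$, $\rho_\lambda:G\to\mathrm{U}(d_\lambda)$, with characters $\chi_\lambda(g)=\mathrm{Tr}\,\rho_\lambda(g)$. The group Fourier transform is $\mathcal{F}_G|g\rangle=\sum_{\lambda,\,i,j\in[d_\lambda]}\sqrt{d_\lambda/|G|}\,\rho_\lambda(g)_{i,j}|\lambda,i,j\rangle$. *)

theory Defs
  imports "HOL-Algebra.Coset" "Jordan_Normal_Form.Schur_Decomposition"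
begin

definition mtrace :: "complex mat \<Rightarrow> complex" where
  "mtrace A = (\<Sum>i<dim_row A. A $$ (i, i))"

definition unitary_mat :: "nat \<Rightarrow> complex mat \<Rightarrow> bool" where
  "unitary_mat n U \<longleftrightarrow> U \<in> carrier_mat n n \<and> U * mat_adjoint U = 1\<^sub>m n"

definition braket :: "complex vec \<Rightarrow> complex vec \<Rightarrow> complex" where
  "braket v w = (\<Sum>k<dim_vec v. cnj (v $ k) * w $ k)"

definition is_rep :: "('g, 'b) monoid_scheme \<Rightarrow> nat \<Rightarrow> ('g \<Rightarrow> complex mat) \<Rightarrow> bool" where
  "is_rep G n \<rho> \<longleftrightarrow>
     (\<forall>g\<in>carrier G. \<rho> g \<in> carrier_mat n n) \<and>
     \<rho> \<one>\<^bsub>G\<^esub> = 1\<^sub>m n \<and>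
     (\<forall>g\<in>carrier G. \<forall>h\<in>carrier G. \<rho> (g \<otimes>\<^bsub>G\<^esub> h) = \<rho> g * \<rho> h)"

definition is_unitary_rep :: "('g, 'b) monoid_scheme \<Rightarrow> nat \<Rightarrow> ('g \<Rightarrow> complex mat) \<Rightarrow> bool" where
  "is_unitary_rep G n \<rho> \<longleftrightarrow> is_rep G n \<rho> \<and> (\<forall>g\<in>carrier G. unitary_mat n (\<rho> g))"

definition is_subspace :: "nat \<Rightarrow> complex vec set \<Rightarrow> bool" where
  "is_subspace n W \<longleftrightarrow> W \<subseteq> carrier_vec n \<and> 0\<^sub>v n \<in> W \<and>
     (\<forall>v\<in>W. \<forall>w\<in>W. v + w \<in> W) \<and> (\<forall>a. \<forall>v\<in>W. a \<cdot>\<^sub>v v \<in> W)"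

definition is_irrep :: "('g, 'b) monoid_scheme \<Rightarrow> nat \<Rightarrow> ('g \<Rightarrow> complex mat) \<Rightarrow> bool" where
  "is_irrep G n \<rho> \<longleftrightarrow> is_rep G n \<rho> \<and> n > 0 \<and>
     (\<forall>W. is_subspace n W \<and> (\<forall>g\<in>carrier G. \<forall>w\<in>W. \<rho> g *\<^sub>v w \<in> W)
          \<longrightarrow> W = {0\<^sub>v n} \<or> W = carrier_vec n)"

definition rep_equiv :: "('g, 'b) monoid_scheme \<Rightarrow> nat \<Rightarrow> ('g \<Rightarrow> complex mat) \<Rightarrow> nat \<Rightarrow> ('g \<Rightarrow> complex mat) \<Rightarrow> bool" where
  "rep_equiv G n \<rho> m \<sigma> \<longleftrightarrow> n = m \<and>
     (\<exists>T \<in> carrier_mat n n. invertible_mat T \<and> (\<forall>g\<in>carrier G. T * \<rho> g = \<sigma> g * T))"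

definition complete_irreps :: "('g, 'b) monoid_scheme \<Rightarrow> 'l set \<Rightarrow> ('l \<Rightarrow> nat) \<Rightarrow> ('l \<Rightarrow> 'g \<Rightarrow> complex mat) \<Rightarrow> bool" where
  "complete_irreps G L dl \<rho> \<longleftrightarrow>
     (\<forall>l\<in>L. is_unitary_rep G (dl l) (\<rho> l) \<and> is_irrep G (dl l) (\<rho> l)) \<and>
     (\<forall>l\<in>L. \<forall>l'\<in>L. l \<noteq> l' \<longrightarrow> \<not> rep_equiv G (dl l) (\<rho> l) (dl l') (\<rho> l')) \<and>
     (\<forall>(n::nat) \<sigma>. is_irrep G n \<sigma> \<longrightarrow> (\<exists>l\<in>L. rep_equiv G n \<sigma> (dl l) (\<rho> l)))"

(* ---------- the circuit ----------
   A state of C^G (x) C^d is a function  g k  (g in carrier G, k < d).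
   A state of (Fourier register) (x) C^d is a function  l i j k
   (l in L, i,j < dl l, k < d). *)

definition fourier :: "('g, 'b) monoid_scheme \<Rightarrow> ('l \<Rightarrow> nat) \<Rightarrow> ('l \<Rightarrow> 'g \<Rightarrow> complex mat)
     \<Rightarrow> ('g \<Rightarrow> nat \<Rightarrow> complex) \<Rightarrow> ('l \<Rightarrow> nat \<Rightarrow> nat \<Rightarrow> nat \<Rightarrow> complex)" where
  "fourier G dl \<rho> \<Phi> = (\<lambda>l i j k.
     \<Sum>g\<in>carrier G. complex_of_real (sqrt (real (dl l) / real (card (carrier G))))
                     * (\<rho> l g $$ (i, j)) * \<Phi> g k)"

definition fourier_inv :: "('g, 'b) monoid_scheme \<Rightarrow> 'l set \<Rightarrow> ('l \<Rightarrow> nat) \<Rightarrow> ('l \<Rightarrow> 'g \<Rightarrow> complex mat)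
     \<Rightarrow> ('l \<Rightarrow> nat \<Rightarrow> nat \<Rightarrow> nat \<Rightarrow> complex) \<Rightarrow> ('g \<Rightarrow> nat \<Rightarrow> complex)" where
  "fourier_inv G L dl \<rho> \<Psi> = (\<lambda>g k.
     \<Sum>l\<in>L. \<Sum>i<dl l. \<Sum>j<dl l.
        complex_of_real (sqrt (real (dl l) / real (card (carrier G))))
        * cnj (\<rho> l g $$ (i, j)) * \<Psi> l i j k)"

definition ctrl_action :: "nat \<Rightarrow> ('g \<Rightarrow> complex mat) \<Rightarrow> ('g \<Rightarrow> nat \<Rightarrow> complex) \<Rightarrow> ('g \<Rightarrow> nat \<Rightarrow> complex)" where
  "ctrl_action d R \<Phi> = (\<lambda>g k. \<Sum>k'<d. R g $$ (k, k') * \<Phi> g k')"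

(* initial state |0> (x) |psi>, where |0> = |l0,0,0> is the basis state of the
   (one-dimensional) trivial representation l0 *)
definition init_state :: "'l \<Rightarrow> complex vec \<Rightarrow> ('l \<Rightarrow> nat \<Rightarrow> nat \<Rightarrow> nat \<Rightarrow> complex)" where
  "init_state l0 \<psi> = (\<lambda>l i j k.
     if l = l0 \<and> i = 0 \<and> j = 0 \<and> k < dim_vec \<psi> then \<psi> $ k else 0)"

definition stateHSP_final ::
  "('g, 'b) monoid_scheme \<Rightarrow> 'l set \<Rightarrow> ('l \<Rightarrow> nat) \<Rightarrow> ('l \<Rightarrow> 'g \<Rightarrow> complex mat) \<Rightarrow> 'l
     \<Rightarrow> ('g \<Rightarrow> complex mat) \<Rightarrow> complex vec \<Rightarrow> ('l \<Rightarrow> nat \<Rightarrow> nat \<Rightarrow> nat \<Rightarrow> complex)" where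
  "stateHSP_final G L dl \<rho> l0 R \<psi> =
     fourier G dl \<rho> (ctrl_action (dim_vec \<psi>) R (fourier_inv G L dl \<rho> (init_state l0 \<psi>)))"

definition prob_stateHSP ::
  "('g, 'b) monoid_scheme \<Rightarrow> 'l set \<Rightarrow> ('l \<Rightarrow> nat) \<Rightarrow> ('l \<Rightarrow> 'g \<Rightarrow> complex mat) \<Rightarrow> 'l
     \<Rightarrow> ('g \<Rightarrow> complex mat) \<Rightarrow> complex vec \<Rightarrow> 'l \<Rightarrow> real" where
  "prob_stateHSP G L dl \<rho> l0 R \<psi> l =
     (\<Sum>i<dl l. \<Sum>j<dl l. \<Sum>k<dim_vec \<psi>.
        (cmod (stateHSP_final G L dl \<rho> l0 R \<psi> l i j k))\<^sup>2)"

end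

theory Submission
  imports Defs
begin

text \<open>
  The final amplitude at \<open>(\<lambda>, i, j, k)\<close> is \<open>sqrt d\<^sub>\<lambda> / |G|\<close> times
  \<open>\<Sum>\<^sub>g \<rho>\<^sub>\<lambda>(g)\<^sub>i\<^sub>j (R(g)\<psi>)\<^sub>k\<close>. Expanding the squared moduli gives a double sum over
  \<open>g, g'\<close>; by unitarity the Frobenius product of \<open>\<rho>\<^sub>\<lambda>(g)\<close> and \<open>\<rho>\<^sub>\<lambda>(g')\<close> is
  \<open>\<chi>\<^sub>\<lambda>(g'\<^sup>-\<^sup>1g)\<close> and the inner product of \<open>R(g')\<psi>\<close> and \<open>R(g)\<psi>\<close> is
  \<open>\<langle>\<psi>|R(g'\<^sup>-\<^sup>1g)|\<psi>\<rangle>\<close>. Substituting \<open>a = g'\<^sup>-\<^sup>1g\<close> leaves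
  \<open>d\<^sub>\<lambda>/|G| \<Sum>\<^sub>a \<chi>\<^sub>\<lambda>(a) \<langle>\<psi>|R(a)|\<psi>\<rangle>\<close>, and writing \<open>a = ch\<close> with \<open>c\<close> a coset
  representative and \<open>R(h)\<psi> = \<psi>\<close> gives the formula.
\<close>

lemma dim_row_mat_adjoint [simp]: "dim_row (mat_adjoint A) = dim_col A"
  unfolding mat_adjoint_def by simp

lemma dim_col_mat_adjoint [simp]: "dim_col (mat_adjoint A) = dim_row A"
  unfolding mat_adjoint_def by simp

lemma mat_adjoint_carrier_mat [simp]:
  "A \<in> carrier_mat n m \<Longrightarrow> mat_adjoint A \<in> carrier_mat m n"
  by auto

lemma index_mat_adjoint [simp]:
  "i < dim_col A \<Longrightarrow> j < dim_row A \<Longrightarrow> mat_adjoint A $$ (i, j) = cnj (A $$ (j, i))"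
  unfolding mat_adjoint_def by (simp add: mat_of_rows_index)

lemma sum_index_mult_cnj_eq_mtrace:
  assumes A: "A \<in> carrier_mat n n" and B: "B \<in> carrier_mat n n"
  shows "(\<Sum>i<n. \<Sum>j<n. A $$ (i, j) * cnj (B $$ (i, j))) = mtrace (mat_adjoint B * A)"
proof -
  have "mtrace (mat_adjoint B * A) = (\<Sum>j<n. \<Sum>i<n. cnj (B $$ (i, j)) * A $$ (i, j))"
    unfolding mtrace_def using A B
    by (auto simp: scalar_prod_def intro!: sum.cong)
  also have "\<dots> = (\<Sum>i<n. \<Sum>j<n. A $$ (i, j) * cnj (B $$ (i, j)))"
    by (subst sum.swap) (simp add: mult.commute)
  finally show ?thesis ..
qed

lemma braket_mult_mat_vec_left:
  assumes U: "U \<in> carrier_mat n n" and v: "v \<in> carrier_vec n" and w: "w \<in> carrier_vec n"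
  shows "braket (U *\<^sub>v v) w = braket v (mat_adjoint U *\<^sub>v w)"
proof -
  have "braket (U *\<^sub>v v) w = (\<Sum>k<n. \<Sum>j<n. cnj (U $$ (k, j)) * cnj (v $ j) * w $ k)"
    unfolding braket_def using U v by (auto simp: scalar_prod_def sum_distrib_right intro!: sum.cong)
  also have "\<dots> = (\<Sum>j<n. \<Sum>k<n. cnj (v $ j) * (cnj (U $$ (k, j)) * w $ k))"
    by (subst sum.swap) (simp add: ac_simps)
  also have "\<dots> = braket v (mat_adjoint U *\<^sub>v w)"
    unfolding braket_def using U v w
    by (auto simp: scalar_prod_def sum_distrib_left intro!: sum.cong)
  finally show ?thesis .
qed

lemma complex_of_real_cmod_sum_power2:
  "complex_of_real ((cmod (\<Sum>g\<in>A. f g))\<^sup>2) = (\<Sum>g\<in>A. \<Sum>g'\<in>A. f g * cnj (f g'))"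
  by (simp only: complex_norm_square cnj_sum sum_product)

lemma sum_swap_nested:
  "(\<Sum>a\<in>A. \<Sum>b\<in>B. \<Sum>c\<in>C. f a b c) = (\<Sum>b\<in>B. \<Sum>c\<in>C. \<Sum>a\<in>A. f a b c)"
  by (subst sum.swap) (rule sum.cong[OF refl], rule sum.swap)

lemma sum_cmod_sum_mult_power2:
  "(\<Sum>i\<in>I. \<Sum>j\<in>J. \<Sum>k\<in>K. complex_of_real ((cmod (\<Sum>g\<in>A. a g i j * b g k))\<^sup>2))
   = (\<Sum>g\<in>A. \<Sum>g'\<in>A. (\<Sum>i\<in>I. \<Sum>j\<in>J. a g i j * cnj (a g' i j)) * (\<Sum>k\<in>K. b g k * cnj (b g' k)))"
proof -
  have "(\<Sum>i\<in>I. \<Sum>j\<in>J. \<Sum>k\<in>K. complex_of_real ((cmod (\<Sum>g\<in>A. a g i j * b g k))\<^sup>2))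
      = (\<Sum>i\<in>I. \<Sum>j\<in>J. \<Sum>k\<in>K. \<Sum>g\<in>A. \<Sum>g'\<in>A. (a g i j * cnj (a g' i j)) * (b g k * cnj (b g' k)))"
    unfolding complex_of_real_cmod_sum_power2 by (intro sum.cong refl) (simp add: ac_simps)
  also have "\<dots> = (\<Sum>g\<in>A. \<Sum>g'\<in>A. \<Sum>i\<in>I. \<Sum>j\<in>J. \<Sum>k\<in>K. (a g i j * cnj (a g' i j)) * (b g k * cnj (b g' k)))"
    by (subst sum_swap_nested[where A=K], subst sum_swap_nested[where A=J],
        subst sum_swap_nested[where A=I]) (rule refl)
  also have "\<dots> = (\<Sum>g\<in>A. \<Sum>g'\<in>A. (\<Sum>i\<in>I. \<Sum>j\<in>J. a g i j * cnj (a g' i j)) * (\<Sum>k\<in>K. b g k * cnj (b g' k)))"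
    by (simp only: sum_distrib_right, simp only: sum_distrib_left)
  finally show ?thesis .
qed

lemma is_unitary_rep_is_rep: "is_unitary_rep G n \<rho> \<Longrightarrow> is_rep G n \<rho>"
  unfolding is_unitary_rep_def by blast

lemma is_rep_carrier_mat:
  "is_rep G n \<rho> \<Longrightarrow> g \<in> carrier G \<Longrightarrow> \<rho> g \<in> carrier_mat n n"
  unfolding is_rep_def by blast

lemma is_rep_mult:
  "is_rep G n \<rho> \<Longrightarrow> g \<in> carrier G \<Longrightarrow> h \<in> carrier G \<Longrightarrow> \<rho> (g \<otimes>\<^bsub>G\<^esub> h) = \<rho> g * \<rho> h"
  unfolding is_rep_def by blast

lemma is_unitary_rep_inv:
  assumes "group G" and rep: "is_unitary_rep G n \<rho>" and g: "g \<in> carrier G"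
  shows "\<rho> (inv\<^bsub>G\<^esub> g) = mat_adjoint (\<rho> g)"
proof -
  let ?V = "\<rho> (inv\<^bsub>G\<^esub> g)"
  have "is_rep G n \<rho>" using is_unitary_rep_is_rep[OF rep] .
  moreover have "inv\<^bsub>G\<^esub> g \<in> carrier G" and "inv\<^bsub>G\<^esub> g \<otimes>\<^bsub>G\<^esub> g = \<one>\<^bsub>G\<^esub>"
    using \<open>group G\<close> g by (auto simp: group.l_inv)
  ultimately have U: "\<rho> g \<in> carrier_mat n n" and V: "?V \<in> carrier_mat n n"
    and left_inv: "?V * \<rho> g = 1\<^sub>m n"
    using g by (auto simp: is_rep_carrier_mat is_rep_mult[symmetric] is_rep_def)
  have right_inv: "\<rho> g * mat_adjoint (\<rho> g) = 1\<^sub>m n"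
    using rep g unfolding is_unitary_rep_def unitary_mat_def by blast
  have "mat_adjoint (\<rho> g) = (?V * \<rho> g) * mat_adjoint (\<rho> g)"
    using left_inv U by simp
  also have "\<dots> = ?V"
    using U V right_inv by (simp add: assoc_mult_mat[of _ n n _ n _ n])
  finally show ?thesis ..
qed

lemma is_unitary_rep_sum_index_mult_cnj:
  assumes "group G" and rep: "is_unitary_rep G n \<rho>" and g: "g \<in> carrier G" and h: "h \<in> carrier G"
  shows "(\<Sum>i<n. \<Sum>j<n. \<rho> g $$ (i, j) * cnj (\<rho> h $$ (i, j))) = mtrace (\<rho> (inv\<^bsub>G\<^esub> h \<otimes>\<^bsub>G\<^esub> g))"
proof -
  have "is_rep G n \<rho>" using is_unitary_rep_is_rep[OF rep] .
  then show ?thesis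
    using g h sum_index_mult_cnj_eq_mtrace is_unitary_rep_inv[OF \<open>group G\<close> rep h]
    by (simp add: is_rep_carrier_mat is_rep_mult group.inv_closed[OF \<open>group G\<close>])
qed

lemma is_unitary_rep_braket:
  assumes "group G" and rep: "is_unitary_rep G n \<rho>" and g: "g \<in> carrier G" and h: "h \<in> carrier G"
    and v: "v \<in> carrier_vec n"
  shows "braket (\<rho> h *\<^sub>v v) (\<rho> g *\<^sub>v v) = braket v (\<rho> (inv\<^bsub>G\<^esub> h \<otimes>\<^bsub>G\<^esub> g) *\<^sub>v v)"
proof -
  have "is_rep G n \<rho>" using is_unitary_rep_is_rep[OF rep] .
  then have Ug: "\<rho> g \<in> carrier_mat n n" and Uh: "\<rho> h \<in> carrier_mat n n"
    using g h by (auto simp: is_rep_carrier_mat)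
  have "\<rho> (inv\<^bsub>G\<^esub> h \<otimes>\<^bsub>G\<^esub> g) = mat_adjoint (\<rho> h) * \<rho> g"
    using \<open>is_rep G n \<rho>\<close> g h is_unitary_rep_inv[OF \<open>group G\<close> rep h]
    by (simp add: is_rep_mult group.inv_closed[OF \<open>group G\<close>])
  then have "\<rho> (inv\<^bsub>G\<^esub> h \<otimes>\<^bsub>G\<^esub> g) *\<^sub>v v = mat_adjoint (\<rho> h) *\<^sub>v (\<rho> g *\<^sub>v v)"
    using assoc_mult_mat_vec[OF mat_adjoint_carrier_mat[OF Uh] Ug v] by simp
  then show ?thesis
    using Ug Uh v by (simp add: braket_mult_mat_vec_left)
qed

lemma is_rep_mult_fixed_vec:
  assumes rep: "is_rep G n \<rho>" and v: "v \<in> carrier_vec n"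
    and g: "g \<in> carrier G" and h: "h \<in> carrier G" and fixed: "\<rho> h *\<^sub>v v = v"
  shows "\<rho> (g \<otimes>\<^bsub>G\<^esub> h) *\<^sub>v v = \<rho> g *\<^sub>v v"
proof -
  have "\<rho> (g \<otimes>\<^bsub>G\<^esub> h) *\<^sub>v v = \<rho> g *\<^sub>v (\<rho> h *\<^sub>v v)"
    using is_rep_mult[OF rep g h]
      assoc_mult_mat_vec[OF is_rep_carrier_mat[OF rep g] is_rep_carrier_mat[OF rep h] v]
    by simp
  then show ?thesis
    using fixed by simp
qed

lemma (in group) sum_carrier_mult_left:
  assumes "a \<in> carrier G"
  shows "(\<Sum>g\<in>carrier G. f (a \<otimes> g)) = (\<Sum>g\<in>carrier G. f g)"
  by (rule sum.reindex_bij_witness[where i="\<lambda>g. inv a \<otimes> g" and j="\<lambda>g. a \<otimes> g"])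
     (use assms in \<open>auto simp: m_assoc[symmetric]\<close>)

lemma (in group) bij_betw_coset_reps_mult:
  assumes H: "subgroup H G" and C: "C \<subseteq> carrier G"
    and reps: "\<forall>g\<in>carrier G. \<exists>!c\<in>C. g \<in> c <# H"
  shows "bij_betw (\<lambda>(c, h). c \<otimes> h) (C \<times> H) (carrier G)"
proof (rule bij_betwI')
  fix x y assume "x \<in> C \<times> H" "y \<in> C \<times> H"
  then obtain c h c' h' where xy: "x = (c, h)" "y = (c', h')"
    and c: "c \<in> C" "c' \<in> C" and h: "h \<in> H" "h' \<in> H" by blast
  have cG: "c \<in> carrier G" "c' \<in> carrier G" and hG: "h \<in> carrier G" "h' \<in> carrier G"
    using c h C subgroup.subset[OF H] by auto
  show "((case x of (c, h) \<Rightarrow> c \<otimes> h) = (case y of (c, h) \<Rightarrow> c \<otimes> h)) = (x = y)"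
  proof
    assume "(case x of (c, h) \<Rightarrow> c \<otimes> h) = (case y of (c, h) \<Rightarrow> c \<otimes> h)"
    then have eq: "c \<otimes> h = c' \<otimes> h'" using xy by simp
    have "c \<otimes> h \<in> c <# H"
      using h(1) unfolding l_coset_def by auto
    moreover have "c \<otimes> h \<in> c' <# H"
      using h(2) unfolding eq l_coset_def by auto
    ultimately have "c = c'" using reps c m_closed[OF cG(1) hG(1)] by blast
    with eq cG hG show "x = y" using xy by simp
  qed simp
next
  fix x assume "x \<in> C \<times> H"
  then show "(case x of (c, h) \<Rightarrow> c \<otimes> h) \<in> carrier G"
    using C subgroup.subset[OF H] by auto
next
  fix g assume "g \<in> carrier G"
  then obtain c where "c \<in> C" "g \<in> c <# H" using reps by blast
  then show "\<exists>x\<in>C \<times> H. g = (case x of (c, h) \<Rightarrow> c \<otimes> h)"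
    unfolding l_coset_def by auto
qed

lemma (in group) sum_carrier_coset_reps:
  assumes "subgroup H G" and "C \<subseteq> carrier G"
    and "\<forall>g\<in>carrier G. \<exists>!c\<in>C. g \<in> c <# H"
  shows "(\<Sum>g\<in>carrier G. f g) = (\<Sum>c\<in>C. \<Sum>h\<in>H. f (c \<otimes> h))"
  using sum.reindex_bij_betw[OF bij_betw_coset_reps_mult[OF assms], of f]
  by (simp add: sum.cartesian_product split_def)

lemma fourier_inv_init_state:
  assumes "finite L" and "l0 \<in> L" and "dl l0 = 1" and "\<rho> l0 g = 1\<^sub>m 1"
  shows "fourier_inv G L dl \<rho> (init_state l0 \<psi>) g k =
    (if k < dim_vec \<psi> then complex_of_real (1 / sqrt (card (carrier G))) * \<psi> $ k else 0)"
proof -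
  have "fourier_inv G L dl \<rho> (init_state l0 \<psi>) g k =
      (\<Sum>l\<in>{l0}. \<Sum>i<dl l. \<Sum>j<dl l. complex_of_real (sqrt (real (dl l) / real (card (carrier G))))
        * cnj (\<rho> l g $$ (i, j)) * init_state l0 \<psi> l i j k)"
    unfolding fourier_inv_def
    by (rule sum.mono_neutral_right) (auto simp: assms init_state_def)
  then show ?thesis
    by (simp add: assms init_state_def real_sqrt_divide)
qed

lemma stateHSP_final_eq_sum:
  assumes "finite L" and "l0 \<in> L" and "dl l0 = 1" and "\<forall>g\<in>carrier G. \<rho> l0 g = 1\<^sub>m 1"
    and R: "\<forall>g\<in>carrier G. R g \<in> carrier_mat (dim_vec \<psi>) (dim_vec \<psi>)" and k: "k < dim_vec \<psi>"
  shows "stateHSP_final G L dl \<rho> l0 R \<psi> l i j k =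
    (\<Sum>g\<in>carrier G. (complex_of_real (sqrt (dl l) / card (carrier G)) * \<rho> l g $$ (i, j))
                    * (R g *\<^sub>v \<psi>) $ k)"
  unfolding stateHSP_final_def fourier_def
proof (rule sum.cong[OF refl])
  fix g assume g: "g \<in> carrier G"
  define s where "s = 1 / sqrt (card (carrier G))"
  have "ctrl_action (dim_vec \<psi>) R (fourier_inv G L dl \<rho> (init_state l0 \<psi>)) g k
      = (\<Sum>k'<dim_vec \<psi>. R g $$ (k, k') * (complex_of_real s * \<psi> $ k'))"
    unfolding ctrl_action_def s_def
    by (intro sum.cong refl) (simp add: fourier_inv_init_state assms g)
  also have "\<dots> = complex_of_real s * (R g *\<^sub>v \<psi>) $ k"
    using R g k carrier_matD[of "R g" "dim_vec \<psi>" "dim_vec \<psi>"]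
    by (simp add: scalar_prod_def sum_distrib_left atLeast0LessThan mult.left_commute)
  finally have ctrl: "ctrl_action (dim_vec \<psi>) R (fourier_inv G L dl \<rho> (init_state l0 \<psi>)) g k
      = complex_of_real s * (R g *\<^sub>v \<psi>) $ k" .
  have const: "sqrt (dl l) / card (carrier G) = sqrt (dl l / card (carrier G)) * s"
    unfolding s_def by (simp add: real_sqrt_divide)
  show "complex_of_real (sqrt (dl l / card (carrier G))) * \<rho> l g $$ (i, j)
      * ctrl_action (dim_vec \<psi>) R (fourier_inv G L dl \<rho> (init_state l0 \<psi>)) g k
    = complex_of_real (sqrt (dl l) / card (carrier G)) * \<rho> l g $$ (i, j) * (R g *\<^sub>v \<psi>) $ k"
    unfolding ctrl const of_real_mult by (simp only: ac_simps)
qed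

lemma prob_stateHSP_eq_sum_mtrace_braket:
  fixes G (structure)
  assumes "group G"
    and R: "is_unitary_rep G (dim_vec \<psi>) R" and \<rho>: "is_unitary_rep G (dl l) (\<rho> l)"
    and "finite L" and "l0 \<in> L" and "dl l0 = 1" and "\<forall>g\<in>carrier G. \<rho> l0 g = 1\<^sub>m 1"
  shows "complex_of_real (prob_stateHSP G L dl \<rho> l0 R \<psi> l)
    = complex_of_real (dl l / card (carrier G))
      * (\<Sum>a\<in>carrier G. mtrace (\<rho> l a) * braket \<psi> (R a *\<^sub>v \<psi>))"
proof -
  interpret group G by fact
  define n where "n = card (carrier G)"
  define c where "c = sqrt (dl l) / n"
  define F where "F a = mtrace (\<rho> l a) * braket \<psi> (R a *\<^sub>v \<psi>)" for a
  have R_carrier: "R g \<in> carrier_mat (dim_vec \<psi>) (dim_vec \<psi>)" if "g \<in> carrier G" for g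
    using is_rep_carrier_mat[OF is_unitary_rep_is_rep[OF R] that] .
  have trace_eq: "(\<Sum>i<dl l. \<Sum>j<dl l.
        (complex_of_real c * \<rho> l g $$ (i, j)) * cnj (complex_of_real c * \<rho> l h $$ (i, j)))
      = complex_of_real (c\<^sup>2) * mtrace (\<rho> l (inv h \<otimes> g))"
    if "g \<in> carrier G" "h \<in> carrier G" for g h
    unfolding is_unitary_rep_sum_index_mult_cnj[OF \<open>group G\<close> \<rho> that, symmetric]
    by (simp add: sum_distrib_left power2_eq_square ac_simps)
  have braket_eq: "(\<Sum>k<dim_vec \<psi>. (R g *\<^sub>v \<psi>) $ k * cnj ((R h *\<^sub>v \<psi>) $ k))
      = braket \<psi> (R (inv h \<otimes> g) *\<^sub>v \<psi>)"
    if "g \<in> carrier G" "h \<in> carrier G" for g h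
    unfolding is_unitary_rep_braket[OF \<open>group G\<close> R that carrier_vec_dim_vec, symmetric]
    using carrier_matD[OF R_carrier[OF that(2)]] by (simp add: braket_def mult.commute)
  have "complex_of_real (prob_stateHSP G L dl \<rho> l0 R \<psi> l)
      = (\<Sum>i<dl l. \<Sum>j<dl l. \<Sum>k<dim_vec \<psi>. complex_of_real
          ((cmod (\<Sum>g\<in>carrier G. (complex_of_real c * \<rho> l g $$ (i, j)) * (R g *\<^sub>v \<psi>) $ k))\<^sup>2))"
    unfolding prob_stateHSP_def c_def n_def using assms R_carrier
    by (simp add: stateHSP_final_eq_sum)
  also have "\<dots> = (\<Sum>g\<in>carrier G. \<Sum>h\<in>carrier G.
      (\<Sum>i<dl l. \<Sum>j<dl l.
        (complex_of_real c * \<rho> l g $$ (i, j)) * cnj (complex_of_real c * \<rho> l h $$ (i, j)))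
      * (\<Sum>k<dim_vec \<psi>. (R g *\<^sub>v \<psi>) $ k * cnj ((R h *\<^sub>v \<psi>) $ k)))"
    by (rule sum_cmod_sum_mult_power2)
  also have "\<dots> = (\<Sum>g\<in>carrier G. \<Sum>h\<in>carrier G. complex_of_real (c\<^sup>2) * F (inv h \<otimes> g))"
    by (intro sum.cong refl) (simp only: trace_eq braket_eq, simp add: F_def)
  also have "\<dots> = (\<Sum>h\<in>carrier G. \<Sum>g\<in>carrier G. complex_of_real (c\<^sup>2) * F (inv h \<otimes> g))"
    by (rule sum.swap)
  also have "\<dots> = (\<Sum>h\<in>carrier G. complex_of_real (c\<^sup>2) * (\<Sum>a\<in>carrier G. F a))"
    by (intro sum.cong refl) (simp add: sum_carrier_mult_left flip: sum_distrib_left)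
  also have "\<dots> = complex_of_real (c\<^sup>2 * n) * (\<Sum>a\<in>carrier G. F a)"
    by (simp add: n_def)
  also have "c\<^sup>2 * n = dl l / n"
    unfolding c_def by (simp add: power2_eq_square)
  finally show ?thesis
    unfolding F_def n_def .
qed

theorem fact3p4:
  fixes G :: "('g, 'b) monoid_scheme"
    and H :: "'g set"
    and R :: "'g \<Rightarrow> complex mat"
    and \<psi> :: "complex vec"
    and d :: nat
    and L :: "'l set"
    and dl :: "'l \<Rightarrow> nat"
    and \<rho> :: "'l \<Rightarrow> 'g \<Rightarrow> complex mat"
    and l0 :: 'l
    and C :: "'g set"
    and l :: 'l
  assumes grp: "group G"
    and fin: "finite (carrier G)"
    and sub: "subgroup H G"
    and R_rep: "is_unitary_rep G d R"
    and psi_dim: "\<psi> \<in> carrier_vec d"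
    and psi_norm: "(\<Sum>k<d. (cmod (\<psi> $ k))\<^sup>2) = 1"
    and psi_inv: "\<forall>h\<in>H. R h *\<^sub>v \<psi> = \<psi>"
    and irreps: "complete_irreps G L dl \<rho>"
    and finL: "finite L"
    and triv: "l0 \<in> L" "dl l0 = 1" "\<forall>g\<in>carrier G. \<rho> l0 g = 1\<^sub>m 1"
    and reps: "C \<subseteq> carrier G" "\<forall>g\<in>carrier G. \<exists>!c\<in>C. g \<in> c <#\<^bsub>G\<^esub> H"
    and lL: "l \<in> L"
  shows "complex_of_real (prob_stateHSP G L dl \<rho> l0 R \<psi> l)
     = complex_of_real (real (dl l) / real (card (carrier G)))
       * (\<Sum>c\<in>C. \<Sum>h\<in>H. mtrace (\<rho> l (c \<otimes>\<^bsub>G\<^esub> h)) * braket \<psi> (R c *\<^sub>v \<psi>))"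
proof -
  interpret group G by fact
  have "complex_of_real (prob_stateHSP G L dl \<rho> l0 R \<psi> l)
      = complex_of_real (real (dl l) / real (card (carrier G)))
        * (\<Sum>a\<in>carrier G. mtrace (\<rho> l a) * braket \<psi> (R a *\<^sub>v \<psi>))"
    using irreps lL psi_dim unfolding complete_irreps_def
    by (intro prob_stateHSP_eq_sum_mtrace_braket) (use grp R_rep finL triv in auto)
  also have "(\<Sum>a\<in>carrier G. mtrace (\<rho> l a) * braket \<psi> (R a *\<^sub>v \<psi>))
      = (\<Sum>c\<in>C. \<Sum>h\<in>H. mtrace (\<rho> l (c \<otimes>\<^bsub>G\<^esub> h)) * braket \<psi> (R (c \<otimes>\<^bsub>G\<^esub> h) *\<^sub>v \<psi>))"
    by (rule sum_carrier_coset_reps[OF sub reps])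
  also have "\<dots> = (\<Sum>c\<in>C. \<Sum>h\<in>H. mtrace (\<rho> l (c \<otimes>\<^bsub>G\<^esub> h)) * braket \<psi> (R c *\<^sub>v \<psi>))"
    by (intro sum.cong refl)
       (simp add: is_rep_mult_fixed_vec[OF is_unitary_rep_is_rep[OF R_rep] psi_dim] psi_inv
         subsetD[OF reps(1)] subgroup.mem_carrier[OF sub])
  finally show ?thesis .
qed

end
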